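(* For every $k\ge 1$, the bi-hypergraph obtained from $\mathcal H_{2k}$ by adding a new vertex $v$ and the edges $\{v,v_{1,j},v_{2k,j+1}\}$ for all $j\in[3]$ is minimal uncolorable.
   Context: A bi-hypergraph $\mathcal H=(V,E)$ consists of a finite vertex set $V$ and a set $E$ of subsets of $V$, called edges, with no edge contained in another. A mapping $f:V\to\mathbb N$ is a proper coloring of $\mathcal H$ if $1<|f(e)|<|e|$ for every $e\in E$, where $f(e)=\{f(v):v\in e\}$. $\mathcal H$ is colorable if it has a proper coloring, and uncolorable otherwise. A subhypergraph of $\mathcal H$ is a bi-hypergraph $(V',E')$ with $V'\subseteq V$, $E'\subseteq E$; $\mathcal H$ is minimal uncolorable if it is uncolorable but every proper subhypergraph of it is colorable. For $k\ge 2$, $\mathcal H_k$ is the $3$-uniform bi-hypergraph with vertex set $\{v_{i,j}: i\in[k], j\in[3]\}$ (all distinct), with the convention $v_{i,4}=v_{i,1}$, $v_{i,5}=v_{i,2}$, whose edges are the sets $\{v_{i,1},v_{i,2},v_{i,3}\}$ for all $i\in[k]$ and the sets $\{v_{q+1,j},v_{q,j},v_{q,j+t}\}$ for all $q\in[k-1]$, $j\in[3]$, $t\in\{1,2\}$. *)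

theory Defs
  imports Main
begin

definition bihypergraph :: "'a set \<times> 'a set set \<Rightarrow> bool" where
  "bihypergraph H \<longleftrightarrow> finite (fst H) \<and> (\<forall>e\<in>snd H. e \<subseteq> fst H)
     \<and> (\<forall>e\<in>snd H. \<forall>e'\<in>snd H. e \<subseteq> e' \<longrightarrow> e = e')"

definition proper_coloring :: "'a set \<times> 'a set set \<Rightarrow> ('a \<Rightarrow> nat) \<Rightarrow> bool" where
  "proper_coloring H f \<longleftrightarrow> (\<forall>e\<in>snd H. 1 < card (f ` e) \<and> card (f ` e) < card e)"

definition colorable :: "'a set \<times> 'a set set \<Rightarrow> bool" where
  "colorable H \<longleftrightarrow> (\<exists>f. proper_coloring H f)"

definition subhypergraph :: "'a set \<times> 'a set set \<Rightarrow> 'a set \<times> 'a set set \<Rightarrow> bool" where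
  "subhypergraph H' H \<longleftrightarrow> bihypergraph H' \<and> fst H' \<subseteq> fst H \<and> snd H' \<subseteq> snd H"

definition minimal_uncolorable :: "'a set \<times> 'a set set \<Rightarrow> bool" where
  "minimal_uncolorable H \<longleftrightarrow> bihypergraph H \<and> \<not> colorable H
     \<and> (\<forall>H'. subhypergraph H' H \<and> H' \<noteq> H \<longrightarrow> colorable H')"

text \<open>Vertices: Some (i,j) is v_{i,j}; None is the extra vertex v.
  Second index taken cyclically in [3]: v_{i,4}=v_{i,1}, v_{i,5}=v_{i,2}.\<close>
definition vx :: "nat \<Rightarrow> nat \<Rightarrow> (nat \<times> nat) option" where
  "vx i j = Some (i, (j - 1) mod 3 + 1)"

definition Hk :: "nat \<Rightarrow> (nat \<times> nat) option set \<times> (nat \<times> nat) option set set" where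
  "Hk k = ({vx i j | i j. i \<in> {1..k} \<and> j \<in> {1..3}},
           {{vx i 1, vx i 2, vx i 3} | i. i \<in> {1..k}}
           \<union> {{vx (q+1) j, vx q j, vx q (j+t)} | q j t. q \<in> {1..k-1} \<and> j \<in> {1..3} \<and> t \<in> {1,2}})"

definition Hk_ext :: "nat \<Rightarrow> (nat \<times> nat) option set \<times> (nat \<times> nat) option set set" where
  "Hk_ext k = (insert None (fst (Hk k)),
               snd (Hk k) \<union> {{None, vx 1 j, vx k (j+1)} | j. j \<in> {1..3}})"

end

theory Submission
  imports Defs
begin

text \<open>In a proper colouring every edge of the 3-uniform hypergraph sees exactly two colours. So on
  each triangle one position r is the odd one out, and the six edges between consecutive
  triangles force the next triangle to have the same odd position with the two colours swapped.
  With an even number of triangles the first and the last one therefore carry swapped patterns,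
  and the three edges through the extra vertex v then require the colour of v to differ from both
  colours while being one of them. Conversely, for every edge there is an explicit colouring, built
  from such alternating layers and modified at the deleted edge, that is proper on all other edges;
  as every vertex lies on an edge, this is minimality.\<close>

lemma colorable_subset_edges:
  assumes "colorable H" "snd H' \<subseteq> snd H"
  shows "colorable H'"
  using assms by (auto simp: colorable_def proper_coloring_def)

lemma minimal_uncolorableI:
  assumes H: "bihypergraph H" and "\<not> colorable H" and covered: "fst H \<subseteq> \<Union>(snd H)"
    and critical: "\<And>e. e \<in> snd H \<Longrightarrow> colorable (fst H, snd H - {e})"
  shows "minimal_uncolorable H"
  unfolding minimal_uncolorable_def
proof (intro conjI allI impI H \<open>\<not> colorable H\<close>; elim conjE)
  fix H' assume sub: "subhypergraph H' H" and "H' \<noteq> H"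
  then have H': "\<forall>e\<in>snd H'. e \<subseteq> fst H'" and sub_V: "fst H' \<subseteq> fst H" and sub_E: "snd H' \<subseteq> snd H"
    by (simp_all add: subhypergraph_def bihypergraph_def)
  have "snd H' \<noteq> snd H"
  proof
    assume E: "snd H' = snd H"
    with covered H' have "fst H \<subseteq> fst H'" by blast
    with sub_V E have "H' = H" by (simp add: prod_eq_iff)
    with \<open>H' \<noteq> H\<close> show False ..
  qed
  with sub_E obtain e where "e \<in> snd H" "snd H' \<subseteq> snd H - {e}"
    by blast
  then show "colorable H'"
    using critical[of e] colorable_subset_edges[of "(fst H, snd H - {e})" H'] by simp
qed

lemma card_image_eq_2_if_proper:
  assumes "proper_coloring H f" "e \<in> snd H" "card e = 3"
  shows "card (f ` e) = 2"
proof -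
  have "card (f ` e) \<le> 3"
    using card_image_le[of e f] assms(3) by (simp add: card_ge_0_finite)
  then show ?thesis
    using assms by (auto simp: proper_coloring_def)
qed

lemma card_triple_eq_2_iff: "card {x, y, z} = 2 \<longleftrightarrow> (x = y \<or> y = z \<or> x = z) \<and> \<not> (x = y \<and> y = z)"
  by (auto simp: card_insert_if)

abbreviation cyclic_succ :: "(nat \<times> nat) set" where
  "cyclic_succ \<equiv> {(1,2), (2,3), (3,1)}"

text \<open>The \<open>Suc\<close> forms are the shapes into which the simplifier turns \<open>1\<close> and \<open>1 + 1\<close>.\<close>
lemma vx_simps [simp]:
  "vx i 1 = Some (i,1)" "vx i 2 = Some (i,2)" "vx i 3 = Some (i,3)" "vx i 4 = Some (i,1)" "vx i 5 = Some (i,2)"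
  "vx i (Suc 0) = Some (i,1)" "vx i (Suc (Suc 0)) = Some (i,2)"
  by (simp_all add: vx_def)

lemma vx_eq: "j \<in> {1,2,3} \<Longrightarrow> vx i j = Some (i, j)"
  by (auto simp: vx_def)

lemma atLeastAtMost_1_3: "{1..3::nat} = {1,2,3}"
  by auto

lemma fst_Hk_ext: "fst (Hk_ext n) = insert None (Some ` ({1..n} \<times> {1,2,3}))"
proof -
  have "{vx i j | i j. i \<in> {1..n} \<and> j \<in> {1,2,3}} = Some ` ({1..n} \<times> {1,2,3})"
    by (force simp: vx_eq)
  then show ?thesis
    unfolding Hk_ext_def Hk_def atLeastAtMost_1_3 by simp
qed

lemma ne_iff_mod3_shift:
  "(a::nat) \<in> {1,2,3} \<Longrightarrow> (d \<in> {1,2,3} \<and> d \<noteq> a) \<longleftrightarrow> (\<exists>t\<in>{1,2}. d = (a + t - 1) mod 3 + 1)"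
  by auto presburger+

lemma Hk_link_edges_eq:
  "{{vx (q+1) j, vx q j, vx q (j+t)} | q j t. q \<in> {1..n-1} \<and> j \<in> {1,2,3} \<and> t \<in> {1,2}}
    = {{Some (q+1,a), Some (q,a), Some (q,d)} | q a d. q \<in> {1..<n} \<and> a \<in> {1,2,3} \<and> d \<in> {1,2,3} \<and> a \<noteq> d}"
proof (intro Collect_cong iffI; elim exE conjE)
  fix e q and j t :: nat
  assume e: "e = {vx (q+1) j, vx q j, vx q (j+t)}" and q: "q \<in> {1..n-1}" and jt: "j \<in> {1,2,3}" "t \<in> {1,2}"
  define d where "d = (j + t - 1) mod 3 + 1"
  have "e = {Some (q+1,j), Some (q,j), Some (q,d)}"
    unfolding e d_def using jt(1) by (simp add: vx_eq vx_def[of q "j + t"])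
  moreover have "d \<in> {1,2,3} \<and> d \<noteq> j"
    unfolding d_def using ne_iff_mod3_shift[OF jt(1)] jt(2) by blast
  moreover have "q \<in> {1..<n}" using q by auto
  ultimately show "\<exists>q a d. e = {Some (q+1,a), Some (q,a), Some (q,d)} \<and> q \<in> {1..<n} \<and> a \<in> {1,2,3} \<and> d \<in> {1,2,3} \<and> a \<noteq> d"
    using jt(1) by (intro exI[of _ q] exI[of _ j] exI[of _ d]) simp
next
  fix e q and a d :: nat
  assume e: "e = {Some (q+1,a), Some (q,a), Some (q,d)}" and q: "q \<in> {1..<n}"
    and ad: "a \<in> {1,2,3}" "d \<in> {1,2,3}" "a \<noteq> d"
  obtain t where t: "t \<in> {1,2}" "d = (a + t - 1) mod 3 + 1"
    using ne_iff_mod3_shift[OF ad(1), of d] ad by blast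
  have "e = {vx (q+1) a, vx q a, vx q (a+t)}"
    unfolding e t(2) using ad(1) by (simp add: vx_eq vx_def[of q "a + t"])
  moreover have "q \<in> {1..n-1}" using q by auto
  ultimately show "\<exists>q j t. e = {vx (q+1) j, vx q j, vx q (j+t)} \<and> q \<in> {1..n-1} \<and> j \<in> {1,2,3} \<and> t \<in> {1,2}"
    using ad(1) t(1) by (intro exI[of _ q] exI[of _ a] exI[of _ t]) simp
qed

lemma snd_Hk_ext: "snd (Hk_ext n) =
    {{Some (i,1), Some (i,2), Some (i,3)} | i. i \<in> {1..n}}
  \<union> {{Some (q+1,a), Some (q,a), Some (q,d)} | q a d. q \<in> {1..<n} \<and> a \<in> {1,2,3} \<and> d \<in> {1,2,3} \<and> a \<noteq> d}
  \<union> {{None, Some (1,1), Some (n,2)}, {None, Some (1,2), Some (n,3)}, {None, Some (1,3), Some (n,1)}}"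
proof -
  have "{{None, vx 1 j, vx n (j+1)} | j. j \<in> {1,2,3}}
    = {{None, Some (1,1), Some (n,2)}, {None, Some (1,2), Some (n,3)}, {None, Some (1,3), Some (n,1)}}"
    unfolding setcompr_eq_image Collect_mem_eq by simp
  then show ?thesis
    using Hk_link_edges_eq[of n] unfolding Hk_ext_def Hk_def atLeastAtMost_1_3 by simp
qed

lemma triangle_in_Hk_ext: "i \<in> {1..n} \<Longrightarrow> {Some (i,1), Some (i,2), Some (i,3)} \<in> snd (Hk_ext n)"
  unfolding snd_Hk_ext by (intro UnI1 CollectI exI[of _ i]) simp

lemma link_in_Hk_ext:
  assumes "q \<in> {1..<n}" "a \<in> {1,2,3}" "d \<in> {1,2,3}" "a \<noteq> d"
  shows "{Some (q+1,a), Some (q,a), Some (q,d)} \<in> snd (Hk_ext n)"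
  unfolding snd_Hk_ext using assms by (intro UnI2[THEN UnI1] CollectI exI[of _ q] exI[of _ a] exI[of _ d]) simp

lemma apex_in_Hk_ext: "(j,j') \<in> cyclic_succ \<Longrightarrow> {None, Some (1,j), Some (n,j')} \<in> snd (Hk_ext n)"
  unfolding snd_Hk_ext by (intro UnI2) auto

lemma Hk_ext_edgeE:
  assumes "e \<in> snd (Hk_ext n)"
  obtains (triangle) i where "i \<in> {1..n}" "e = {Some (i,1), Some (i,2), Some (i,3)}"
  | (link) q a d where "q \<in> {1..<n}" "a \<in> {1,2,3}" "d \<in> {1,2,3}" "a \<noteq> d"
      "e = {Some (q+1,a), Some (q,a), Some (q,d)}"
  | (apex) j j' where "(j,j') \<in> cyclic_succ" "e = {None, Some (1,j), Some (n,j')}"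
  using assms unfolding snd_Hk_ext
proof (elim UnE)
  assume "e \<in> {{Some (i,1), Some (i,2), Some (i,3)} | i. i \<in> {1..n}}"
  then show thesis using triangle by blast
next
  assume "e \<in> {{Some (q+1,a), Some (q,a), Some (q,d)} | q a d.
    q \<in> {1..<n} \<and> a \<in> {1,2,3} \<and> d \<in> {1,2,3} \<and> a \<noteq> d}"
  then show thesis using link by blast
next
  assume "e \<in> {{None, Some (1,1), Some (n,2)}, {None, Some (1,2), Some (n,3)}, {None, Some (1,3), Some (n,1)}}"
  then show thesis using apex by auto
qed

lemma card_Hk_ext_edge:
  assumes "e \<in> snd (Hk_ext n)"
  shows "card e = 3"
  using assms by (cases rule: Hk_ext_edgeE) auto

lemma Hk_ext_edge_subset:
  assumes "0 < n" "e \<in> snd (Hk_ext n)"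
  shows "e \<subseteq> fst (Hk_ext n)"
  using assms(2) by (cases rule: Hk_ext_edgeE) (use assms(1) in \<open>auto simp: fst_Hk_ext\<close>)

lemma bihypergraph_Hk_ext:
  assumes "0 < n"
  shows "bihypergraph (Hk_ext n)"
  unfolding bihypergraph_def
proof (intro conjI ballI impI)
  show "finite (fst (Hk_ext n))"
    by (simp add: fst_Hk_ext)
next
  fix e assume "e \<in> snd (Hk_ext n)"
  then show "e \<subseteq> fst (Hk_ext n)"
    by (rule Hk_ext_edge_subset[OF assms])
next
  fix e e' assume "e \<in> snd (Hk_ext n)" "e' \<in> snd (Hk_ext n)" "e \<subseteq> e'"
  then show "e = e'"
    using card_subset_eq[of e' e] card_Hk_ext_edge card_ge_0_finite by force
qed

lemma Hk_ext_vertices_covered: "fst (Hk_ext n) \<subseteq> \<Union>(snd (Hk_ext n))"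
proof
  fix x assume "x \<in> fst (Hk_ext n)"
  then consider "x = None" | i p where "x = Some (i,p)" "i \<in> {1..n}" "p \<in> {1,2,3}"
    by (auto simp: fst_Hk_ext)
  then show "x \<in> \<Union>(snd (Hk_ext n))"
  proof cases
    case 1
    with apex_in_Hk_ext[of 1 2 n] show ?thesis by blast
  next
    case 2
    with triangle_in_Hk_ext[of i n] show ?thesis by blast
  qed
qed

definition odd_one_out :: "(nat \<Rightarrow> 'c) \<Rightarrow> nat \<Rightarrow> 'c \<Rightarrow> 'c \<Rightarrow> bool" where
  "odd_one_out g r a b \<longleftrightarrow> r \<in> {1,2,3} \<and> a \<noteq> b \<and> (\<forall>p\<in>{1,2,3}. g p = (if p = r then b else a))"

lemma odd_one_out_exists:
  assumes "card {g 1, g 2, g 3} = 2"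
  shows "\<exists>r a b. odd_one_out g r a b"
proof -
  consider "g 1 = g 2" "g 2 \<noteq> g 3" | "g 1 = g 3" "g 2 \<noteq> g 3" | "g 2 = g 3" "g 1 \<noteq> g 2"
    using assms by (auto simp: card_triple_eq_2_iff)
  then show ?thesis
  proof cases
    case 1 then have "odd_one_out g 3 (g 1) (g 3)" by (auto simp: odd_one_out_def)
    then show ?thesis by blast
  next
    case 2 then have "odd_one_out g 2 (g 1) (g 2)" by (auto simp: odd_one_out_def)
    then show ?thesis by blast
  next
    case 3 then have "odd_one_out g 1 (g 2) (g 1)" by (auto simp: odd_one_out_def)
    then show ?thesis by blast
  qed
qed

lemma odd_one_out_next_layer:
  assumes g: "odd_one_out g r a b" and "card {h 1, h 2, h 3} = 2"
    and "\<And>p p'. p \<in> {1,2,3} \<Longrightarrow> p' \<in> {1,2,3} \<Longrightarrow> p \<noteq> p' \<Longrightarrow> card {h p, g p, g p'} = 2"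
  shows "odd_one_out h r b a"
proof -
  have "card {h 1, g 1, g 2} = 2" "card {h 1, g 1, g 3} = 2" "card {h 2, g 2, g 1} = 2"
    "card {h 2, g 2, g 3} = 2" "card {h 3, g 3, g 1} = 2" "card {h 3, g 3, g 2} = 2"
    using assms(3) by simp_all
  moreover have "r = 1 \<or> r = 2 \<or> r = 3"
    using g by (simp add: odd_one_out_def)
  ultimately show ?thesis
    using g assms(2) unfolding odd_one_out_def card_triple_eq_2_iff by (elim disjE) auto
qed

lemma odd_one_out_apex_conflict:
  assumes "odd_one_out g r a b" "odd_one_out h r b a"
  shows "card {v, g 1, h 2} \<noteq> 2 \<or> card {v, g 2, h 3} \<noteq> 2 \<or> card {v, g 3, h 1} \<noteq> 2"
proof -
  have "r = 1 \<or> r = 2 \<or> r = 3"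
    using assms by (simp add: odd_one_out_def)
  then show ?thesis
    using assms unfolding odd_one_out_def card_triple_eq_2_iff by (elim disjE) auto
qed
lemma Hk_ext_not_colorable:
  assumes "even n" "0 < n"
  shows "\<not> colorable (Hk_ext n)"
proof
  assume "colorable (Hk_ext n)"
  then obtain f where f: "proper_coloring (Hk_ext n) f"
    by (auto simp: colorable_def)
  define c where "c i p = f (Some (i, p))" for i p
  have edge: "card (f ` e) = 2" if "e \<in> snd (Hk_ext n)" for e
    using card_image_eq_2_if_proper[OF f that card_Hk_ext_edge[OF that]] .
  have triangle: "card {c i 1, c i 2, c i 3} = 2" if "i \<in> {1..n}" for i
    using edge[OF triangle_in_Hk_ext[OF that]] by (simp add: c_def)
  have link: "card {c (q+1) p, c q p, c q p'} = 2"
    if "q \<in> {1..<n}" "p \<in> {1,2,3}" "p' \<in> {1,2,3}" "p \<noteq> p'" for q p p'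
    using edge[OF link_in_Hk_ext[OF that]] by (simp add: c_def)
  have apex: "card {f None, c 1 1, c n 2} = 2" "card {f None, c 1 2, c n 3} = 2" "card {f None, c 1 3, c n 1} = 2"
    using edge[OF apex_in_Hk_ext[of 1 2]] edge[OF apex_in_Hk_ext[of 2 3]] edge[OF apex_in_Hk_ext[of 3 1]]
    by (simp_all add: c_def)
  obtain r a b where first: "odd_one_out (c 1) r a b"
    using odd_one_out_exists[OF triangle[of 1]] \<open>0 < n\<close> by auto
  have layer: "odd_one_out (c i) r (if odd i then a else b) (if odd i then b else a)" if "1 \<le> i" "i \<le> n" for i
    using that
  proof (induction i rule: nat_induct_at_least)
    case base
    show ?case using first by simp
  next
    case (Suc i)
    have "odd_one_out (c (i+1)) r (if odd i then b else a) (if odd i then a else b)"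
    proof (rule odd_one_out_next_layer[OF Suc.IH])
      show "i \<le> n" "card {c (i+1) 1, c (i+1) 2, c (i+1) 3} = 2"
        using Suc.prems Suc.hyps triangle[of "i+1"] by auto
      show "card {c (i+1) p, c i p, c i p'} = 2" if "p \<in> {1,2,3}" "p' \<in> {1,2,3}" "p \<noteq> p'" for p p'
        using Suc.prems Suc.hyps link[of i p p'] that by auto
    qed
    then show ?case by (cases "odd i") simp_all
  qed
  from first layer[of n] assms have "card {f None, c 1 1, c n 2} \<noteq> 2 \<or> card {f None, c 1 2, c n 3} \<noteq> 2 \<or> card {f None, c 1 3, c n 1} \<noteq> 2"
    by (intro odd_one_out_apex_conflict) auto
  with apex show False by simp
qed

lemma colorable_Hk_ext_minus_edgeI:
  fixes v :: nat and c :: "nat \<Rightarrow> nat \<Rightarrow> nat"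
  assumes triangle: "\<And>i. i \<in> {1..n} \<Longrightarrow> {Some (i,1), Some (i,2), Some (i,3)} \<noteq> e0
      \<Longrightarrow> card {c i 1, c i 2, c i 3} = 2"
    and link: "\<And>q a d. q \<in> {1..<n} \<Longrightarrow> a \<in> {1,2,3} \<Longrightarrow> d \<in> {1,2,3} \<Longrightarrow> a \<noteq> d
      \<Longrightarrow> {Some (q+1,a), Some (q,a), Some (q,d)} \<noteq> e0 \<Longrightarrow> card {c (q+1) a, c q a, c q d} = 2"
    and apex: "\<And>j j'. (j,j') \<in> cyclic_succ \<Longrightarrow> {None, Some (1,j), Some (n,j')} \<noteq> e0
      \<Longrightarrow> card {v, c 1 j, c n j'} = 2"
  shows "colorable (fst (Hk_ext n), snd (Hk_ext n) - {e0})"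
proof -
  let ?f = "case_option v (case_prod c)"
  have "card (?f ` e) = 2" if "e \<in> snd (Hk_ext n)" "e \<noteq> e0" for e
    using that(1)
  proof (cases rule: Hk_ext_edgeE)
    case (triangle i)
    then show ?thesis using assms(1)[of i] that(2) by simp
  next
    case (link q a d)
    then show ?thesis using assms(2)[of q a d] that(2) by simp
  next
    case (apex j j')
    then show ?thesis using assms(3)[of j j'] that(2) by simp
  qed
  then have "proper_coloring (fst (Hk_ext n), snd (Hk_ext n) - {e0}) ?f"
    by (simp add: proper_coloring_def card_Hk_ext_edge[of _ n])
  then show ?thesis
    unfolding colorable_def by blast
qed

definition alternating_coloring :: "nat \<Rightarrow> 'c \<Rightarrow> 'c \<Rightarrow> nat \<Rightarrow> nat \<Rightarrow> 'c" where
  "alternating_coloring r x y i p = (if (p = r) = odd i then x else y)"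

lemma card_alternating_coloring_triangle:
  assumes "r \<in> {1,2,3}" "x \<noteq> y"
  shows "card {alternating_coloring r x y i 1, alternating_coloring r x y i 2, alternating_coloring r x y i 3} = 2"
  using assms by (auto simp: alternating_coloring_def card_triple_eq_2_iff)

lemma card_alternating_coloring_link:
  assumes "r \<in> {1,2,3}" "x \<noteq> y" "a \<in> {1,2,3}" "d \<in> {1,2,3}" "a \<noteq> d"
  shows "card {alternating_coloring r x y (q+1) a, alternating_coloring r x y q a, alternating_coloring r x y q d} = 2"
  using assms by (auto simp: alternating_coloring_def card_triple_eq_2_iff)

lemma Hk_ext_apex_edge_critical:
  assumes "even n" "(j0, j0') \<in> cyclic_succ"
  shows "colorable (fst (Hk_ext n), snd (Hk_ext n) - {{None, Some (1,j0), Some (n,j0')}})"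
proof -
  \<comment> \<open>j0 is the odd position of the first layer, so v can only conflict through the deleted edge\<close>
  define c where "c = alternating_coloring j0 (1::nat) 0"
  have r: "j0 \<in> {1,2,3}" using assms(2) by auto
  show ?thesis
  proof (rule colorable_Hk_ext_minus_edgeI[of n _ c 1])
    show "card {c i 1, c i 2, c i 3} = 2" for i
      unfolding c_def by (rule card_alternating_coloring_triangle[OF r]) simp
    show "card {c (q+1) a, c q a, c q d} = 2" if "a \<in> {1,2,3}" "d \<in> {1,2,3}" "a \<noteq> d" for q a d
      unfolding c_def by (rule card_alternating_coloring_link[OF r _ that]) simp
    show "card {1, c 1 j, c n j'} = 2"
      if "(j,j') \<in> cyclic_succ" "{None, Some (1,j), Some (n,j')} \<noteq> {None, Some (1,j0), Some (n,j0')}" for j j'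
      using that assms by (auto simp: c_def alternating_coloring_def card_triple_eq_2_iff)
  qed
qed

lemma Hk_ext_triangle_edge_critical:
  assumes "even n" "i0 \<in> {1..n}"
  shows "colorable (fst (Hk_ext n), snd (Hk_ext n) - {{Some (i0,1), Some (i0,2), Some (i0,3)}})"
proof -
  \<comment> \<open>layer i0 becomes monochromatic, so the layers above it need a fresh colour 2\<close>
  define m :: nat where "m = (if even i0 then 1 else 0)"
  define c where "c i p = (if i < i0 then alternating_coloring 1 1 0 i p
    else if i = i0 then m else alternating_coloring 2 2 (1 - m) i p)" for i p
  show ?thesis
  proof (rule colorable_Hk_ext_minus_edgeI[of n _ c 0])
    show "card {c i 1, c i 2, c i 3} = 2"
      if "{Some (i,1), Some (i,2), Some (i,3)} \<noteq> {Some (i0,1), Some (i0,2), Some (i0,3)}" for i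
      using that card_alternating_coloring_triangle[of 1 "1::nat" 0 i]
        card_alternating_coloring_triangle[of 2 "2::nat" "1 - m" i]
      by (auto simp: c_def m_def)
    show "card {c (q+1) a, c q a, c q d} = 2"
      if "a \<in> {1,2,3}" "d \<in> {1,2,3}" "a \<noteq> d" for q a d
    proof -
      consider "q + 1 < i0" | "q + 1 = i0" | "q = i0" | "i0 < q" by linarith
      then show ?thesis
      proof cases
        case 1
        then show ?thesis using card_alternating_coloring_link[of 1 "1::nat" 0 a d q] that
          by (simp add: c_def)
      next
        case 2
        then show ?thesis using that by (auto simp: c_def m_def alternating_coloring_def card_triple_eq_2_iff)
      next
        case 3
        then show ?thesis using that by (auto simp: c_def m_def alternating_coloring_def card_triple_eq_2_iff)
      next
        case 4
        then show ?thesis using card_alternating_coloring_link[of 2 "2::nat" "1 - m" a d q] that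
          by (simp add: c_def m_def)
      qed
    qed
    show "card {0, c 1 j, c n j'} = 2" if "(j,j') \<in> cyclic_succ" for j j'
      using that assms by (auto simp: c_def m_def alternating_coloring_def card_triple_eq_2_iff)
  qed
qed

lemma Hk_ext_link_edge_critical_next:
  assumes "even n" "q0 \<in> {1..<n}" "(a0,d0) \<in> cyclic_succ" "(d0,r) \<in> cyclic_succ"
  shows "colorable (fst (Hk_ext n), snd (Hk_ext n) - {{Some (q0+1,a0), Some (q0,a0), Some (q0,d0)}})"
proof -
  \<comment> \<open>without the deleted edge the odd position may move from r to d0 with the colours unswapped\<close>
  define c where "c i p = (if i \<le> q0 then alternating_coloring r 1 0 i p
    else alternating_coloring d0 0 (1::nat) i p)" for i p
  have pos: "r \<in> {1,2,3}" "d0 \<in> {1,2,3}" using assms(3,4) by auto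
  show ?thesis
  proof (rule colorable_Hk_ext_minus_edgeI[of n _ c 1])
    show "card {c i 1, c i 2, c i 3} = 2" for i
      using card_alternating_coloring_triangle[OF pos(1), of "1::nat" 0 i]
        card_alternating_coloring_triangle[OF pos(2), of "0::nat" 1 i]
      by (simp add: c_def)
    show "card {c (q+1) a, c q a, c q d} = 2"
      if "a \<in> {1,2,3}" "d \<in> {1,2,3}" "a \<noteq> d"
        "{Some (q+1,a), Some (q,a), Some (q,d)} \<noteq> {Some (q0+1,a0), Some (q0,a0), Some (q0,d0)}" for q a d
    proof -
      consider "q < q0" | "q = q0" | "q0 < q" by linarith
      then show ?thesis
      proof cases
        case 1
        then show ?thesis using card_alternating_coloring_link[OF pos(1) _ that(1-3), of "1::nat" 0 q]
          by (simp add: c_def)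
      next
        case 2
        with that(4) have "\<not> (a = a0 \<and> d = d0)" by auto
        then show ?thesis using 2 that(1-3) assms(3,4)
          by (cases "odd q0") (auto simp: c_def alternating_coloring_def card_triple_eq_2_iff)
      next
        case 3
        then show ?thesis using card_alternating_coloring_link[OF pos(2) _ that(1-3), of "0::nat" 1 q]
          by (simp add: c_def)
      qed
    qed
    show "card {1, c 1 j, c n j'} = 2" if "(j,j') \<in> cyclic_succ" for j j'
    proof -
      have "c 1 j = (if j = r then 1 else 0)" "c n j' = (if j' = d0 then 1 else 0)"
        using assms(1,2) by (auto simp: c_def alternating_coloring_def)
      moreover have "\<not> (j = r \<and> j' = d0)"
        using that assms(3,4) by (simp, elim disjE conjE) simp_all
      ultimately show ?thesis
        by (auto simp: card_insert_if)
    qed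
  qed
qed

lemma Hk_ext_link_edge_critical_prev:
  assumes "even n" "q0 \<in> {1..<n}" "(r,a0) \<in> cyclic_succ"
  shows "colorable (fst (Hk_ext n), snd (Hk_ext n) - {{Some (q0+1,a0), Some (q0,a0), Some (q0,r)}})"
proof -
  \<comment> \<open>without the deleted edge the vertex in position a0 of layer q0+1 may take a fresh colour 2\<close>
  define c where "c i p = (if i \<le> q0 then alternating_coloring r 1 0 i p
    else if odd q0 then alternating_coloring a0 1 2 i p else alternating_coloring a0 2 (0::nat) i p)" for i p
  have pos: "r \<in> {1,2,3}" "a0 \<in> {1,2,3}" using assms(3) by auto
  show ?thesis
  proof (rule colorable_Hk_ext_minus_edgeI[of n _ c "if odd q0 then 1 else 0"])
    show "card {c i 1, c i 2, c i 3} = 2" for i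
      using card_alternating_coloring_triangle[OF pos(1), of "1::nat" 0 i]
        card_alternating_coloring_triangle[OF pos(2), of "1::nat" 2 i]
        card_alternating_coloring_triangle[OF pos(2), of "2::nat" 0 i]
      by (simp add: c_def)
    show "card {c (q+1) a, c q a, c q d} = 2"
      if "a \<in> {1,2,3}" "d \<in> {1,2,3}" "a \<noteq> d"
        "{Some (q+1,a), Some (q,a), Some (q,d)} \<noteq> {Some (q0+1,a0), Some (q0,a0), Some (q0,r)}" for q a d
    proof -
      consider "q < q0" | "q = q0" | "q0 < q" by linarith
      then show ?thesis
      proof cases
        case 1
        then show ?thesis using card_alternating_coloring_link[OF pos(1) _ that(1-3), of "1::nat" 0 q]
          by (simp add: c_def)
      next
        case 2
        with that(4) have "\<not> (a = a0 \<and> d = r)" by auto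
        then show ?thesis using 2 that(1-3) assms(3)
          by (cases "odd q0") (auto simp: c_def alternating_coloring_def card_triple_eq_2_iff)
      next
        case 3
        then show ?thesis
          using card_alternating_coloring_link[OF pos(2) _ that(1-3), of "1::nat" 2 q]
            card_alternating_coloring_link[OF pos(2) _ that(1-3), of "2::nat" 0 q]
          by (simp add: c_def)
      qed
    qed
    show "card {if odd q0 then 1 else 0, c 1 j, c n j'} = 2" if "(j,j') \<in> cyclic_succ" for j j'
    proof -
      have "c 1 j = (if j = r then 1 else 0)"
        "c n j' = (if odd q0 then (if j' = a0 then 2 else 1) else (if j' = a0 then 0 else 2))"
        using assms(1,2) by (auto simp: c_def alternating_coloring_def)
      moreover have "j = r \<longleftrightarrow> j' = a0"
        using that assms(3) by (simp, elim disjE conjE) simp_all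
      ultimately show ?thesis
        by (auto simp: card_insert_if)
    qed
  qed
qed

lemma Hk_ext_edge_critical:
  assumes "even n" "e \<in> snd (Hk_ext n)"
  shows "colorable (fst (Hk_ext n), snd (Hk_ext n) - {e})"
  using assms(2)
proof (cases rule: Hk_ext_edgeE)
  case (triangle i)
  then show ?thesis using Hk_ext_triangle_edge_critical[OF assms(1)] by simp
next
  case (link q a d)
  then consider r where "(a,d) \<in> cyclic_succ" "(d,r) \<in> cyclic_succ" | "(d,a) \<in> cyclic_succ"
    by (simp, elim disjE) simp_all
  then show ?thesis
  proof cases
    case 1
    then show ?thesis using Hk_ext_link_edge_critical_next[OF assms(1)] link by simp
  next
    case 2
    then show ?thesis using Hk_ext_link_edge_critical_prev[OF assms(1)] link by simp
  qed
next
  case (apex j j')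
  then show ?thesis using Hk_ext_apex_edge_critical[OF assms(1)] by simp
qed

theorem mainTheorem17:
  fixes k :: nat
  assumes "k \<ge> 1"
  shows "minimal_uncolorable (Hk_ext (2 * k))"
proof -
  have n: "even (2 * k)" "0 < 2 * k"
    using assms by auto
  show ?thesis
  proof (rule minimal_uncolorableI)
    show "bihypergraph (Hk_ext (2 * k))" by (rule bihypergraph_Hk_ext[OF n(2)])
    show "\<not> colorable (Hk_ext (2 * k))" by (rule Hk_ext_not_colorable[OF n])
    show "fst (Hk_ext (2 * k)) \<subseteq> \<Union>(snd (Hk_ext (2 * k)))" by (rule Hk_ext_vertices_covered)
    show "colorable (fst (Hk_ext (2 * k)), snd (Hk_ext (2 * k)) - {e})" if "e \<in> snd (Hk_ext (2 * k))" for e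
      by (rule Hk_ext_edge_critical[OF n(1) that])
  qed
qed

end
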